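(* Let $N$ be a weakly connected forward-backward conflict free Petri net without self-loops having at least one proper source place or at least one proper sink place. If the only-sink marking $M_d$ is reachable from the only-source marking $M_0$, then $N$ is acyclic.
   Context: A Petri net $N=(P,T,{}^\bullet(-),(-)^\bullet)$ consists of disjoint finite sets $P$ (places) and $T$ (transitions) and functions ${}^\bullet(-),(-)^\bullet\colon T\to\mathcal P(P)$ giving inputs and outputs of each transition; arcs $p\to t$ iff $p\in{}^\bullet t$, $t\to p$ iff $p\in t^\bullet$. For a place $p$, ${}^\bullet p=\{t:p\in t^\bullet\}$, $p^\bullet=\{t:p\in{}^\bullet t\}$. No self-loops: no place is both input and output of the same transition. FBCF: $|{}^\bullet p|\le1$ and $|p^\bullet|\le1$ for all places. A source is a place with ${}^\bullet p=\emptyset$, a sink one with $p^\bullet=\emptyset$; a proper source is a source with $p^\bullet\ne\emptyset$, a proper sink a sink with ${}^\bullet p\neq\emptyset$. $N$ is weakly connected if its underlying undirected graph is connected, and acyclic if it has no directed cycle. A marking is $M\colon P\to\mathbb N$; $t$ is enabled if $M(p)\ge1$ for all $p\in{}^\bullet t$, and firing it subtracts one token from each $p\in{}^\bullet t$ and adds one to each $p\in t^\bullet$. $M$ is reachable from $M_0$ if obtained by a finite sequence of firings of enabled transitions. $M_0(p)=1$ if $p$ is a source, $0$ otherwise; $M_d(p)=1$ if $p$ is a sink, $0$ otherwise. *)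

theory Defs
  imports Main
begin

definition petri_net :: "'p set \<Rightarrow> 't set \<Rightarrow> ('t \<Rightarrow> 'p set) \<Rightarrow> ('t \<Rightarrow> 'p set) \<Rightarrow> bool" where
  "petri_net P T pre post \<longleftrightarrow> finite P \<and> finite T \<and> (\<forall>t\<in>T. pre t \<subseteq> P \<and> post t \<subseteq> P)"

definition pre_place :: "'t set \<Rightarrow> ('t \<Rightarrow> 'p set) \<Rightarrow> 'p \<Rightarrow> 't set" where
  "pre_place T post p = {t\<in>T. p \<in> post t}"

definition post_place :: "'t set \<Rightarrow> ('t \<Rightarrow> 'p set) \<Rightarrow> 'p \<Rightarrow> 't set" where
  "post_place T pre p = {t\<in>T. p \<in> pre t}"

definition no_self_loops :: "'t set \<Rightarrow> ('t \<Rightarrow> 'p set) \<Rightarrow> ('t \<Rightarrow> 'p set) \<Rightarrow> bool" where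
  "no_self_loops T pre post \<longleftrightarrow> (\<forall>t\<in>T. pre t \<inter> post t = {})"

definition FBCF :: "'p set \<Rightarrow> 't set \<Rightarrow> ('t \<Rightarrow> 'p set) \<Rightarrow> ('t \<Rightarrow> 'p set) \<Rightarrow> bool" where
  "FBCF P T pre post \<longleftrightarrow>
     (\<forall>p\<in>P. card (pre_place T post p) \<le> 1 \<and> card (post_place T pre p) \<le> 1)"

definition proper_source :: "'p set \<Rightarrow> 't set \<Rightarrow> ('t \<Rightarrow> 'p set) \<Rightarrow> ('t \<Rightarrow> 'p set) \<Rightarrow> 'p \<Rightarrow> bool" where
  "proper_source P T pre post p \<longleftrightarrow>
     p \<in> P \<and> pre_place T post p = {} \<and> post_place T pre p \<noteq> {}"

definition proper_sink :: "'p set \<Rightarrow> 't set \<Rightarrow> ('t \<Rightarrow> 'p set) \<Rightarrow> ('t \<Rightarrow> 'p set) \<Rightarrow> 'p \<Rightarrow> bool" where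
  "proper_sink P T pre post p \<longleftrightarrow>
     p \<in> P \<and> post_place T pre p = {} \<and> pre_place T post p \<noteq> {}"

definition arcs :: "'t set \<Rightarrow> ('t \<Rightarrow> 'p set) \<Rightarrow> ('t \<Rightarrow> 'p set) \<Rightarrow> ('p + 't) rel" where
  "arcs T pre post =
     {(Inl p, Inr t) | p t. t \<in> T \<and> p \<in> pre t} \<union> {(Inr t, Inl p) | p t. t \<in> T \<and> p \<in> post t}"

definition nodes :: "'p set \<Rightarrow> 't set \<Rightarrow> ('p + 't) set" where
  "nodes P T = Inl ` P \<union> Inr ` T"

definition weakly_connected :: "'p set \<Rightarrow> 't set \<Rightarrow> ('t \<Rightarrow> 'p set) \<Rightarrow> ('t \<Rightarrow> 'p set) \<Rightarrow> bool" where
  "weakly_connected P T pre post \<longleftrightarrow>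
     (\<forall>x\<in>nodes P T. \<forall>y\<in>nodes P T. (x, y) \<in> (arcs T pre post \<union> (arcs T pre post)\<inverse>)\<^sup>*)"

definition net_acyclic :: "'t set \<Rightarrow> ('t \<Rightarrow> 'p set) \<Rightarrow> ('t \<Rightarrow> 'p set) \<Rightarrow> bool" where
  "net_acyclic T pre post \<longleftrightarrow> acyclic (arcs T pre post)"

type_synonym 'p marking = "'p \<Rightarrow> nat"

definition enabled :: "('t \<Rightarrow> 'p set) \<Rightarrow> 'p marking \<Rightarrow> 't \<Rightarrow> bool" where
  "enabled pre M t \<longleftrightarrow> (\<forall>p\<in>pre t. M p \<ge> 1)"

definition fire :: "('t \<Rightarrow> 'p set) \<Rightarrow> ('t \<Rightarrow> 'p set) \<Rightarrow> 'p marking \<Rightarrow> 't \<Rightarrow> 'p marking" where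
  "fire pre post M t = (\<lambda>p. M p - (if p \<in> pre t then 1 else 0) + (if p \<in> post t then 1 else 0))"

definition step :: "'t set \<Rightarrow> ('t \<Rightarrow> 'p set) \<Rightarrow> ('t \<Rightarrow> 'p set) \<Rightarrow> 'p marking \<Rightarrow> 'p marking \<Rightarrow> bool" where
  "step T pre post M M' \<longleftrightarrow> (\<exists>t\<in>T. enabled pre M t \<and> M' = fire pre post M t)"

definition reachable :: "'t set \<Rightarrow> ('t \<Rightarrow> 'p set) \<Rightarrow> ('t \<Rightarrow> 'p set) \<Rightarrow> 'p marking \<Rightarrow> 'p marking \<Rightarrow> bool" where
  "reachable T pre post M0 M \<longleftrightarrow> (step T pre post)\<^sup>*\<^sup>* M0 M"

definition only_source_marking :: "'p set \<Rightarrow> 't set \<Rightarrow> ('t \<Rightarrow> 'p set) \<Rightarrow> 'p marking" where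
  "only_source_marking P T post = (\<lambda>p. if p \<in> P \<and> pre_place T post p = {} then 1 else 0)"

definition only_sink_marking :: "'p set \<Rightarrow> 't set \<Rightarrow> ('t \<Rightarrow> 'p set) \<Rightarrow> 'p marking" where
  "only_sink_marking P T pre = (\<lambda>p. if p \<in> P \<and> post_place T pre p = {} then 1 else 0)"

end

theory Submission
  imports Defs
begin

text \<open>A run from the only-source to the only-sink marking must fire every transition: each
internal place of an FBCF net has one producer and one consumer, which the state equation
forces to fire equally often, so "has fired" spreads along the connected net from the
transition next to a proper source or sink. Moreover a transition consuming from an initially
empty place can fire only after that place's producer has fired. Ranking every transition by
its first firing therefore makes all arcs point forward, and the net is acyclic.\<close>

lemma takeWhile_neq_split: "x \<in> set xs \<Longrightarrow> \<exists>vs. xs = takeWhile ((\<noteq>) x) xs @ x # vs"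
  by (induction xs) auto

lemma length_takeWhile_neq_less:
  "y \<in> set (takeWhile ((\<noteq>) x) xs) \<Longrightarrow>
   length (takeWhile ((\<noteq>) y) xs) < length (takeWhile ((\<noteq>) x) xs)"
proof (induction xs)
  case (Cons a xs)
  then show ?case by (cases "y = a"; cases "x = a") auto
qed simp

lemma snoc_eq_append_Cons:
  "xs @ [x] = us @ y # vs \<Longrightarrow> (us = xs \<and> y = x) \<or> (\<exists>ws. xs = us @ y # ws)"
  by (cases vs rule: rev_cases) auto

lemma acyclic_if_ranking: "(\<And>x y. (x, y) \<in> r \<Longrightarrow> f x < (f y :: nat)) \<Longrightarrow> acyclic r"
  by (meson acyclic_subset wf_acyclic wf_inv_image wf_less_than in_inv_image less_than_iff subrelI)

lemma rtrancl_sym_closure_invariant: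
  assumes "\<And>x y. (x, y) \<in> r \<Longrightarrow> Q x = Q y" and "(x, y) \<in> (r \<union> r\<inverse>)\<^sup>*"
  shows "Q x = Q y"
  using assms(2) by induction (auto dest: assms(1))

definition arc_count :: "('t \<Rightarrow> 'p set) \<Rightarrow> 'p \<Rightarrow> 't list \<Rightarrow> nat" where
  "arc_count F p ts = length (filter (\<lambda>t. p \<in> F t) ts)"

text \<open>The state equation; it gives the marking reached by firing \<open>ts\<close> only when \<open>ts\<close> is fireable.\<close>
definition marking_after ::
  "('t \<Rightarrow> 'p set) \<Rightarrow> ('t \<Rightarrow> 'p set) \<Rightarrow> 'p marking \<Rightarrow> 't list \<Rightarrow> 'p \<Rightarrow> int" where
  "marking_after pre post M ts p = int (M p) + int (arc_count post p ts) - int (arc_count pre p ts)"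

lemma marking_after_snoc:
  "marking_after pre post M (ts @ [t]) p =
   marking_after pre post M ts p + (if p \<in> post t then 1 else 0) - (if p \<in> pre t then 1 else 0)"
  by (simp add: marking_after_def arc_count_def)

lemma arc_count_eq_count_list:
  assumes "set ts \<subseteq> T" "{t\<in>T. p \<in> F t} = {t0}"
  shows "arc_count F p ts = count_list ts t0"
proof -
  have "filter (\<lambda>t. p \<in> F t) ts = filter ((=) t0) ts"
    using assms by (intro filter_cong) auto
  then show ?thesis by (simp add: arc_count_def count_list_eq_length_filter)
qed

lemma reachable_firing_sequence:
  assumes "reachable T pre post M0 M"
  obtains ts where "set ts \<subseteq> T" and "\<And>p. int (M p) = marking_after pre post M0 ts p"
    and "\<And>us t vs p. ts = us @ t # vs \<Longrightarrow> p \<in> pre t \<Longrightarrow> marking_after pre post M0 us p \<ge> 1"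
proof -
  have "\<exists>ts. set ts \<subseteq> T \<and> (\<forall>p. int (M p) = marking_after pre post M0 ts p) \<and>
      (\<forall>us t vs p. ts = us @ t # vs \<longrightarrow> p \<in> pre t \<longrightarrow> marking_after pre post M0 us p \<ge> 1)"
    using assms unfolding reachable_def
  proof (induction rule: rtranclp_induct)
    case base
    show ?case by (rule exI[of _ "[]"]) (simp add: marking_after_def arc_count_def)
  next
    case (step M M')
    then obtain ts where ts: "set ts \<subseteq> T" "\<And>p. int (M p) = marking_after pre post M0 ts p"
      "\<And>us t vs p. ts = us @ t # vs \<Longrightarrow> p \<in> pre t \<Longrightarrow> marking_after pre post M0 us p \<ge> 1"
      by blast
    from \<open>step T pre post M M'\<close> obtain t where t: "t \<in> T" "enabled pre M t" "M' = fire pre post M t"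
      unfolding step_def by blast
    have tokens: "M p \<ge> 1" if "p \<in> pre t" for p
      using t(2) that by (simp add: enabled_def)
    have "int (M' p) = marking_after pre post M0 (ts @ [t]) p" for p
      using ts(2)[of p] tokens[of p]
      by (cases "p \<in> pre t"; cases "p \<in> post t") (simp_all add: t(3) fire_def marking_after_snoc)
    moreover have "marking_after pre post M0 us p \<ge> 1"
      if "ts @ [t] = us @ t' # vs" "p \<in> pre t'" for us t' vs p
      using snoc_eq_append_Cons[OF that(1)]
    proof (elim disjE exE conjE)
      assume "us = ts" "t' = t"
      then show ?thesis using ts(2)[of p] tokens[of p] that(2) by simp
    qed (use ts(3) that(2) in blast)
    ultimately show ?case using ts(1) t(1) by (intro exI[of _ "ts @ [t]"]) auto
  qed
  then show ?thesis using that by blast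
qed

locale fbcf_net =
  fixes P :: "'p set" and T :: "'t set" and pre post :: "'t \<Rightarrow> 'p set"
  assumes petri_net: "petri_net P T pre post" and fbcf: "FBCF P T pre post"
begin

lemma finite_transitions: "finite T"
  using petri_net by (simp add: petri_net_def)

lemma pre_subset: "t \<in> T \<Longrightarrow> pre t \<subseteq> P" and post_subset: "t \<in> T \<Longrightarrow> post t \<subseteq> P"
  using petri_net by (auto simp: petri_net_def)

lemma pre_place_eq_singleton:
  assumes "t \<in> T" "p \<in> post t"
  shows "pre_place T post p = {t}"
proof -
  have "card (pre_place T post p) \<le> 1" "finite (pre_place T post p)"
    using fbcf post_subset assms finite_transitions by (auto simp: FBCF_def pre_place_def)
  then show ?thesis using assms by (auto simp: pre_place_def card_le_Suc0_iff_eq)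
qed

lemma post_place_eq_singleton:
  assumes "t \<in> T" "p \<in> pre t"
  shows "post_place T pre p = {t}"
proof -
  have "card (post_place T pre p) \<le> 1" "finite (post_place T pre p)"
    using fbcf pre_subset assms finite_transitions by (auto simp: FBCF_def post_place_def)
  then show ?thesis using assms by (auto simp: post_place_def card_le_Suc0_iff_eq)
qed

end

locale source_to_sink_run = fbcf_net +
  fixes ts :: "'t list"
  assumes run_transitions: "set ts \<subseteq> T"
    and run_reaches_sinks: "\<And>p. int (only_sink_marking P T pre p) =
      marking_after pre post (only_source_marking P T post) ts p"
    and run_enabled: "\<And>us t vs p. ts = us @ t # vs \<Longrightarrow> p \<in> pre t \<Longrightarrow>
      marking_after pre post (only_source_marking P T post) us p \<ge> 1"
begin

lemma producer_fires_iff_consumer_fires: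
  assumes "t \<in> T" "p \<in> post t" "t' \<in> T" "p \<in> pre t'"
  shows "t \<in> set ts \<longleftrightarrow> t' \<in> set ts"
proof -
  have producer: "pre_place T post p = {t}" and consumer: "post_place T pre p = {t'}"
    using assms pre_place_eq_singleton post_place_eq_singleton by auto
  then have "only_source_marking P T post p = 0" "only_sink_marking P T pre p = 0"
    by (simp_all add: only_source_marking_def only_sink_marking_def)
  then have "arc_count post p ts = arc_count pre p ts"
    using run_reaches_sinks[of p] by (simp add: marking_after_def)
  then have "count_list ts t = count_list ts t'"
    using producer consumer run_transitions
    by (simp add: pre_place_def post_place_def arc_count_eq_count_list)
  then show ?thesis by (metis count_list_0_iff)
qed

lemma run_nonempty:
  assumes "(\<exists>p. proper_source P T pre post p) \<or> (\<exists>p. proper_sink P T pre post p)"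
  shows "ts \<noteq> []"
proof
  assume "ts = []"
  then have "only_sink_marking P T pre p = only_source_marking P T post p" for p
    using run_reaches_sinks[of p] by (simp add: marking_after_def arc_count_def)
  moreover obtain p where "p \<in> P" "pre_place T post p = {} \<longleftrightarrow> post_place T pre p \<noteq> {}"
    using assms unfolding proper_source_def proper_sink_def by blast
  ultimately show False
    by (metis only_sink_marking_def only_source_marking_def zero_neq_one)
qed

lemma neighbours_fire_together:
  assumes "t \<in> T" "p \<in> pre t \<or> p \<in> post t" "t' \<in> T" "p \<in> pre t' \<or> p \<in> post t'"
  shows "t \<in> set ts \<longleftrightarrow> t' \<in> set ts"
proof -
  consider "p \<in> post t" "p \<in> post t'" | "p \<in> pre t" "p \<in> pre t'"
    | "p \<in> post t" "p \<in> pre t'" | "p \<in> pre t" "p \<in> post t'"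
    using assms(2,4) by blast
  then show ?thesis
  proof cases
    case 1
    then show ?thesis using pre_place_eq_singleton assms(1,3) by (metis singleton_inject)
  next
    case 2
    then show ?thesis using post_place_eq_singleton assms(1,3) by (metis singleton_inject)
  next
    case 3
    show ?thesis using producer_fires_iff_consumer_fires[OF assms(1) 3(1) assms(3) 3(2)] .
  next
    case 4
    show ?thesis using producer_fires_iff_consumer_fires[OF assms(3) 4(2) assms(1) 4(1)] by simp
  qed
qed

lemma all_transitions_fire:
  assumes "weakly_connected P T pre post" and "ts \<noteq> []"
  shows "set ts = T"
proof
  show "set ts \<subseteq> T" by (rule run_transitions)
  define fired where
    "fired x = (case x of Inl p \<Rightarrow> (\<forall>t\<in>T. p \<in> pre t \<or> p \<in> post t \<longrightarrow> t \<in> set ts)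
      | Inr t \<Rightarrow> t \<in> set ts)" for x
  have place_fired: "fired (Inl p) = fired (Inr t)" if "t \<in> T" "p \<in> pre t \<or> p \<in> post t" for p t
    using neighbours_fire_together[OF that] that unfolding fired_def by (simp (no_asm)) blast
  have arc_invariant: "fired x = fired y" if "(x, y) \<in> arcs T pre post" for x y
    using that place_fired by (auto simp: arcs_def)
  obtain t0 where t0: "t0 \<in> set ts" using assms(2) by (cases ts) auto
  show "T \<subseteq> set ts"
  proof
    fix t assume "t \<in> T"
    then have "(Inr t0, Inr t) \<in> (arcs T pre post \<union> (arcs T pre post)\<inverse>)\<^sup>*"
      using assms(1) run_transitions t0 by (auto simp: weakly_connected_def nodes_def)
    with arc_invariant have "fired (Inr t0) = fired (Inr t)" by (rule rtrancl_sym_closure_invariant)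
    with t0 show "t \<in> set ts" by (simp add: fired_def)
  qed
qed

lemma producer_fires_before_consumer:
  assumes "t \<in> T" "p \<in> post t" "t' \<in> T" "p \<in> pre t'" "ts = us @ t' # vs"
  shows "t \<in> set us"
proof (rule ccontr)
  assume "t \<notin> set us"
  have "set us \<subseteq> T" using run_transitions assms(5) by auto
  then have "arc_count post p us = 0"
    using \<open>t \<notin> set us\<close> pre_place_eq_singleton[OF assms(1,2)]
    by (simp add: pre_place_def arc_count_eq_count_list)
  moreover have "only_source_marking P T post p = 0"
    using pre_place_eq_singleton[OF assms(1,2)] by (simp add: only_source_marking_def)
  ultimately show False
    using run_enabled[OF assms(5,4)] by (simp add: marking_after_def)
qed

lemma acyclic_if_all_fire:
  assumes "set ts = T"
  shows "net_acyclic T pre post"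
proof -
  define first :: "'t \<Rightarrow> nat" where "first t = length (takeWhile ((\<noteq>) t) ts)" for t
  have first_less: "first t < first t'"
    if arc: "t \<in> T" "p \<in> post t" "t' \<in> T" "p \<in> pre t'" for t t' p
  proof -
    have "t' \<in> set ts" using assms arc(3) by simp
    then obtain vs where "ts = takeWhile ((\<noteq>) t') ts @ t' # vs"
      by (blast dest: takeWhile_neq_split)
    from producer_fires_before_consumer[OF arc this] show ?thesis
      unfolding first_def by (rule length_takeWhile_neq_less)
  qed
  define rank where
    "rank x = (case x of
        Inl p \<Rightarrow> (if pre_place T post p = {} then 0 else 2 * first (THE t. pre_place T post p = {t}) + 2)
      | Inr t \<Rightarrow> 2 * first t + 1)" for x
  have "rank x < rank y" if "(x, y) \<in> arcs T pre post" for x y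
    using that pre_place_eq_singleton
    by (fastforce simp: arcs_def rank_def pre_place_def dest: first_less)
  then show ?thesis unfolding net_acyclic_def by (rule acyclic_if_ranking[of _ rank])
qed

end

theorem mainTheorem6:
  fixes P :: "'p set" and T :: "'t set" and pre post :: "'t \<Rightarrow> 'p set"
  assumes "petri_net P T pre post"
    and "weakly_connected P T pre post"
    and "FBCF P T pre post"
    and "no_self_loops T pre post"
    and "(\<exists>p. proper_source P T pre post p) \<or> (\<exists>p. proper_sink P T pre post p)"
    and "reachable T pre post (only_source_marking P T post) (only_sink_marking P T pre)"
  shows "net_acyclic T pre post"
proof -
  obtain ts where "set ts \<subseteq> T"
    and "\<And>p. int (only_sink_marking P T pre p) =
      marking_after pre post (only_source_marking P T post) ts p"
    and "\<And>us t vs p. ts = us @ t # vs \<Longrightarrow> p \<in> pre t \<Longrightarrow>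
      marking_after pre post (only_source_marking P T post) us p \<ge> 1"
    using reachable_firing_sequence[OF assms(6)] by blast
  with assms(1,3) interpret source_to_sink_run P T pre post ts
    by unfold_locales
  have "ts \<noteq> []" using assms(5) by (rule run_nonempty)
  with assms(2) have "set ts = T" by (rule all_transitions_fire)
  then show ?thesis by (rule acyclic_if_all_fire)
qed

end
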